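(* Let $\Theta$ and $\Theta'$ be spaces of input histories satisfying the free-choice condition, with $E^\Theta\cap E^{\Theta'}=\emptyset$. Then the causal completions of the parallel composition $\Theta\cup\Theta'$ are $$\mathrm{CC}(\Theta\cup\Theta')=\{\hat\Theta\cup\hat\Theta':\ \hat\Theta\in\mathrm{CC}(\Theta),\ \hat\Theta'\in\mathrm{CC}(\Theta')\}.$$
   Context: A partial function is a function $f$ with domain $\mathrm{dom}(f)$ a subset of an index set, taking values in given sets; ordered by restriction ($f\le g$ iff $\mathrm{dom}(f)\subseteq\mathrm{dom}(g)$, $g|_{\mathrm{dom}(f)}=f$). Compatible = agreeing on common domain; a compatible set $\mathcal F$ has join $\bigvee\mathcal F$ (union). A set $\Theta$ is $\vee$-prime if for compatible $\mathcal F\subseteq\Theta$ with $\bigvee\mathcal F\in\Theta$ we have $\bigvee\mathcal F\in\mathcal F$. A space of input histories is a finite $\vee$-prime set of partial functions; $E^\Theta=\bigcup_{h\in\Theta}\mathrm{dom}(h)$, $I^\Theta_\omega=\{h(\omega):h\in\Theta,\omega\in\mathrm{dom}(h)\}$, $\mathrm{Ext}(\Theta)=\{\bigvee\mathcal F:\emptyset\ne\mathcal F\subseteq\Theta\text{ compatible}\}$. Free-choice: maximal elements of $\mathrm{Ext}(\Theta)$ are exactly the total functions in $\prod_{\omega\in E^\Theta}I^\Theta_\omega$. $\mathrm{tips}_\Theta(h)=\mathrm{dom}(h)\setminus\bigcup\{\mathrm{dom}(k):k\in\mathrm{Ext}(\Theta),k<h\}$. Causally complete: free-choice and $|\mathrm{tips}_\Theta(h)|=1$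 for all $h\in\Theta$. Spaces are ordered by $\Theta_1\le\Theta_2$ iff $\mathrm{Ext}(\Theta_1)\supseteq\mathrm{Ext}(\Theta_2)$. The causal completions $\mathrm{CC}(\Theta)$ of a space $\Theta$ satisfying free choice are the maximal elements of $\{\Theta_1\le\Theta:\Theta_1\text{ causally complete}\}$. The parallel composition of spaces with disjoint event sets is their set-theoretic union. *)

theory Defs
  imports Main
begin

type_synonym ('e,'v) pfun = "'e \<Rightarrow> 'v option"

definition pf_le :: "('e,'v) pfun \<Rightarrow> ('e,'v) pfun \<Rightarrow> bool" where
  "pf_le f g \<longleftrightarrow> f \<subseteq>\<^sub>m g"

definition pf_less :: "('e,'v) pfun \<Rightarrow> ('e,'v) pfun \<Rightarrow> bool" where
  "pf_less f g \<longleftrightarrow> pf_le f g \<and> f \<noteq> g"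

definition compatible :: "('e,'v) pfun set \<Rightarrow> bool" where
  "compatible F \<longleftrightarrow> (\<forall>f\<in>F. \<forall>g\<in>F. \<forall>w. w \<in> dom f \<and> w \<in> dom g \<longrightarrow> f w = g w)"

text \<open>Join (union) of a family of partial functions; meaningful for compatible families.\<close>
definition pf_join :: "('e,'v) pfun set \<Rightarrow> ('e,'v) pfun" where
  "pf_join F = (\<lambda>w. if \<exists>f\<in>F. w \<in> dom f then (SOME f. f \<in> F \<and> w \<in> dom f) w else None)"

definition join_prime :: "('e,'v) pfun set \<Rightarrow> bool" where
  "join_prime \<Theta> \<longleftrightarrow>
     (\<forall>F. F \<subseteq> \<Theta> \<and> compatible F \<and> pf_join F \<in> \<Theta> \<longrightarrow> pf_join F \<in> F)"

definition is_space :: "('e,'v) pfun set \<Rightarrow> bool" where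
  "is_space \<Theta> \<longleftrightarrow> finite \<Theta> \<and> join_prime \<Theta>"

definition events :: "('e,'v) pfun set \<Rightarrow> 'e set" where
  "events \<Theta> = (\<Union>h\<in>\<Theta>. dom h)"

definition inputs :: "('e,'v) pfun set \<Rightarrow> 'e \<Rightarrow> 'v set" where
  "inputs \<Theta> w = {v. \<exists>h\<in>\<Theta>. w \<in> dom h \<and> h w = Some v}"

definition Ext :: "('e,'v) pfun set \<Rightarrow> ('e,'v) pfun set" where
  "Ext \<Theta> = {pf_join F | F. F \<noteq> {} \<and> F \<subseteq> \<Theta> \<and> compatible F}"

definition maximal_ext :: "('e,'v) pfun set \<Rightarrow> ('e,'v) pfun set" where
  "maximal_ext \<Theta> = {k \<in> Ext \<Theta>. \<forall>k'\<in>Ext \<Theta>. pf_le k k' \<longrightarrow> k' = k}"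

definition total_funs :: "('e,'v) pfun set \<Rightarrow> ('e,'v) pfun set" where
  "total_funs \<Theta> = {k. dom k = events \<Theta> \<and> (\<forall>w\<in>events \<Theta>. the (k w) \<in> inputs \<Theta> w)}"

definition free_choice :: "('e,'v) pfun set \<Rightarrow> bool" where
  "free_choice \<Theta> \<longleftrightarrow> maximal_ext \<Theta> = total_funs \<Theta>"

definition tips :: "('e,'v) pfun set \<Rightarrow> ('e,'v) pfun \<Rightarrow> 'e set" where
  "tips \<Theta> h = dom h - (\<Union>{dom k | k. k \<in> Ext \<Theta> \<and> pf_less k h})"

definition causally_complete :: "('e,'v) pfun set \<Rightarrow> bool" where
  "causally_complete \<Theta> \<longleftrightarrow> free_choice \<Theta> \<and> (\<forall>h\<in>\<Theta>. \<exists>w. tips \<Theta> h = {w})"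

definition space_le :: "('e,'v) pfun set \<Rightarrow> ('e,'v) pfun set \<Rightarrow> bool" where
  "space_le \<Theta>1 \<Theta>2 \<longleftrightarrow> Ext \<Theta>2 \<subseteq> Ext \<Theta>1"

definition CC :: "('e,'v) pfun set \<Rightarrow> ('e,'v) pfun set set" where
  "CC \<Theta> = (let S = {\<Theta>1. is_space \<Theta>1 \<and> space_le \<Theta>1 \<Theta> \<and> causally_complete \<Theta>1} in
     {\<Theta>1 \<in> S. \<forall>\<Theta>2\<in>S. space_le \<Theta>1 \<Theta>2 \<longrightarrow> space_le \<Theta>2 \<Theta>1})"

end

theory Submission
  imports Defs
begin

text \<open>A causally complete refinement \<open>C\<close> of \<open>\<Theta> \<union> \<Theta>'\<close> is the union of its two
  components: the histories lying below extensions of \<open>\<Theta>\<close>, and those lying below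
  extensions of \<open>\<Theta>'\<close>. Each component is a causally complete refinement of \<open>\<Theta>\<close>
  (resp. \<open>\<Theta>'\<close>) with the same events. Since the event sets are disjoint, an extension of a
  union whose domain lies inside the events of one side is already an extension of that side,
  so refinements of the two sides can be combined and split without loss, and maximality
  transfers in both directions. Join-primeness makes a space recoverable from its extensions,
  which turns the comparison of extensions into equality of spaces.\<close>

section \<open>Joins of compatible partial functions\<close>

lemma pf_join_witness:
  assumes "f \<in> F" "w \<in> dom f"
  obtains g where "g \<in> F" "w \<in> dom g" "pf_join F w = g w"
proof -
  have ex: "\<exists>f\<in>F. w \<in> dom f" using assms by blast
  let ?g = "SOME g. g \<in> F \<and> w \<in> dom g"
  have "?g \<in> F \<and> w \<in> dom ?g" using ex someI_ex[of "\<lambda>g. g \<in> F \<and> w \<in> dom g"] by blast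
  moreover have "pf_join F w = ?g w" unfolding pf_join_def by (rule if_P[OF ex])
  ultimately show thesis using that by blast
qed

lemma pf_join_eq:
  assumes "compatible F" "f \<in> F" "w \<in> dom f"
  shows "pf_join F w = f w"
proof -
  obtain g where "g \<in> F" "w \<in> dom g" "pf_join F w = g w"
    using assms(2,3) by (rule pf_join_witness)
  then show ?thesis using assms unfolding compatible_def by simp
qed

lemma dom_pf_join: "dom (pf_join F) = (\<Union>f\<in>F. dom f)"
proof (intro equalityI subsetI)
  fix w assume "w \<in> dom (pf_join F)"
  then show "w \<in> (\<Union>f\<in>F. dom f)" unfolding pf_join_def by (auto split: if_splits)
next
  fix w assume "w \<in> (\<Union>f\<in>F. dom f)"
  then obtain f where "f \<in> F" "w \<in> dom f" by blast
  then obtain g where "w \<in> dom g" "pf_join F w = g w" by (rule pf_join_witness)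
  then show "w \<in> dom (pf_join F)" by auto
qed

lemma pf_join_SomeD:
  assumes "pf_join F w = Some v"
  shows "\<exists>f\<in>F. f w = Some v"
proof -
  have "w \<in> dom (pf_join F)" using assms by blast
  then obtain f where "f \<in> F" "w \<in> dom f" unfolding dom_pf_join by blast
  then obtain g where "g \<in> F" "pf_join F w = g w" by (rule pf_join_witness)
  then show ?thesis using assms by auto
qed

lemma map_le_pf_join: "compatible F \<Longrightarrow> f \<in> F \<Longrightarrow> f \<subseteq>\<^sub>m pf_join F"
  unfolding map_le_def by (simp add: pf_join_eq)

lemma compatible_if_bounded:
  assumes "\<And>f. f \<in> F \<Longrightarrow> f \<subseteq>\<^sub>m g"
  shows "compatible F"
  unfolding compatible_def
proof (intro ballI allI impI)
  fix f f' w assume "f \<in> F" "f' \<in> F" "w \<in> dom f \<and> w \<in> dom f'"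
  then have "f w = g w" "f' w = g w" using assms unfolding map_le_def by blast+
  then show "f w = f' w" by simp
qed

lemma pf_join_eqI:
  assumes le: "\<And>f. f \<in> F \<Longrightarrow> f \<subseteq>\<^sub>m g" and covered: "dom g \<subseteq> (\<Union>f\<in>F. dom f)"
  shows "pf_join F = g"
proof
  fix w
  show "pf_join F w = g w"
  proof (cases "\<exists>f\<in>F. w \<in> dom f")
    case True
    then obtain f where f: "f \<in> F" "w \<in> dom f" by blast
    have "pf_join F w = f w" using pf_join_eq[OF compatible_if_bounded[OF le] f] .
    also have "\<dots> = g w" using le[OF f(1)] f(2) unfolding map_le_def by blast
    finally show ?thesis .
  next
    case False
    then have "w \<notin> dom (pf_join F)" "w \<notin> dom g" using covered unfolding dom_pf_join by blast+
    then show ?thesis by (simp add: domIff)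
  qed
qed

section \<open>Extensions\<close>

lemma Ext_memE:
  assumes "k \<in> Ext P"
  obtains F where "F \<noteq> {}" "F \<subseteq> P" "compatible F" "pf_join F = k"
  using assms unfolding Ext_def by blast

lemma Ext_memI: "F \<noteq> {} \<Longrightarrow> F \<subseteq> P \<Longrightarrow> compatible F \<Longrightarrow> pf_join F \<in> Ext P"
  unfolding Ext_def by blast

lemma subset_Ext: "P \<subseteq> Ext P"
proof
  fix h assume "h \<in> P"
  moreover have "compatible {h}" by (rule compatible_if_bounded[of _ h]) simp
  moreover have "pf_join {h} = h" by (rule pf_join_eqI) auto
  ultimately show "h \<in> Ext P" using Ext_memI[of "{h}" P] by simp
qed

lemma Ext_flatten:
  assumes FQ: "F \<subseteq> Ext Q" and cF: "compatible F"
  obtains G where "G \<subseteq> Q" "compatible G" "pf_join G = pf_join F" "\<forall>g\<in>G. \<exists>f\<in>F. g \<subseteq>\<^sub>m f"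
    "G = {} \<longleftrightarrow> F = {}"
proof -
  have "\<exists>Gf. Gf \<noteq> {} \<and> Gf \<subseteq> Q \<and> compatible Gf \<and> pf_join Gf = f" if "f \<in> F" for f
  proof -
    have "f \<in> Ext Q" using FQ that by blast
    then obtain Gf where "Gf \<noteq> {}" "Gf \<subseteq> Q" "compatible Gf" "pf_join Gf = f" by (rule Ext_memE)
    then show ?thesis by blast
  qed
  then obtain Gen where Gen: "\<And>f. f \<in> F \<Longrightarrow>
      Gen f \<noteq> {} \<and> Gen f \<subseteq> Q \<and> compatible (Gen f) \<and> pf_join (Gen f) = f"
    by metis
  define G where "G = (\<Union>f\<in>F. Gen f)"
  have below_gen: "\<exists>f\<in>F. g \<subseteq>\<^sub>m f" if "g \<in> G" for g
  proof -
    obtain f where f: "f \<in> F" "g \<in> Gen f" using \<open>g \<in> G\<close> unfolding G_def by blast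
    then have "g \<subseteq>\<^sub>m pf_join (Gen f)" using Gen map_le_pf_join by blast
    then show ?thesis using f Gen by auto
  qed
  have below_join: "g \<subseteq>\<^sub>m pf_join F" if "g \<in> G" for g
    using below_gen[OF that] map_le_pf_join[OF cF] map_le_trans by blast
  have "pf_join G = pf_join F"
  proof (rule pf_join_eqI)
    show "g \<subseteq>\<^sub>m pf_join F" if "g \<in> G" for g using below_join[OF that] .
    show "dom (pf_join F) \<subseteq> (\<Union>g\<in>G. dom g)"
    proof
      fix w assume "w \<in> dom (pf_join F)"
      then obtain f where f: "f \<in> F" "w \<in> dom f" unfolding dom_pf_join by blast
      then have "w \<in> dom (pf_join (Gen f))" using Gen by simp
      then obtain g where "g \<in> Gen f" "w \<in> dom g" unfolding dom_pf_join by blast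
      then show "w \<in> (\<Union>g\<in>G. dom g)" using f(1) unfolding G_def by blast
    qed
  qed
  moreover have "G \<subseteq> Q" "G = {} \<longleftrightarrow> F = {}" using Gen unfolding G_def by blast+
  ultimately show thesis
    using that compatible_if_bounded[OF below_join] below_gen by blast
qed

lemma Ext_subset:
  assumes "P \<subseteq> Ext Q"
  shows "Ext P \<subseteq> Ext Q"
proof
  fix k assume "k \<in> Ext P"
  then obtain F where F: "F \<noteq> {}" "F \<subseteq> P" "compatible F" "pf_join F = k"
    by (rule Ext_memE)
  from F(2) assms have "F \<subseteq> Ext Q" by blast
  then obtain G where "G \<subseteq> Q" "compatible G" "pf_join G = pf_join F"
    "\<forall>g\<in>G. \<exists>f\<in>F. g \<subseteq>\<^sub>m f" "G = {} \<longleftrightarrow> F = {}"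
    using F(3) by (rule Ext_flatten)
  with F(1,4) Ext_memI[of G Q] show "k \<in> Ext Q" by simp
qed

lemma Ext_subset_Ext_iff: "Ext P \<subseteq> Ext Q \<longleftrightarrow> P \<subseteq> Ext Q"
  using Ext_subset subset_Ext by blast

lemma Ext_mono: "P \<subseteq> Q \<Longrightarrow> Ext P \<subseteq> Ext Q"
  using Ext_subset subset_Ext by blast

lemma pf_join_in_Ext:
  assumes "F \<noteq> {}" "F \<subseteq> Ext P" "compatible F"
  shows "pf_join F \<in> Ext P"
proof -
  have "pf_join F \<in> Ext (Ext P)" using assms by (rule Ext_memI)
  moreover have "Ext (Ext P) \<subseteq> Ext P" by (rule Ext_subset) simp
  ultimately show ?thesis by blast
qed

lemma Ext_SomeD:
  assumes "k \<in> Ext P" "k w = Some v"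
  shows "\<exists>f\<in>P. f w = Some v"
proof -
  obtain F where "F \<subseteq> P" "pf_join F = k" using assms(1) by (rule Ext_memE)
  then show ?thesis using pf_join_SomeD[of F w v] assms(2) by auto
qed

lemma dom_subset_events: "h \<in> P \<Longrightarrow> dom h \<subseteq> events P"
  unfolding events_def by blast

lemma events_mono: "A \<subseteq> B \<Longrightarrow> events A \<subseteq> events B"
  unfolding events_def by (rule UN_mono) simp_all

lemma inputs_mono: "A \<subseteq> B \<Longrightarrow> inputs A w \<subseteq> inputs B w"
  unfolding inputs_def by blast

lemma events_Ext [simp]: "events (Ext P) = events P"
proof
  show "events (Ext P) \<subseteq> events P"
  proof
    fix w assume "w \<in> events (Ext P)"
    then obtain k where k: "k \<in> Ext P" "w \<in> dom k" unfolding events_def by blast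
    then obtain v where "k w = Some v" by blast
    then obtain f where "f \<in> P" "f w = Some v" using Ext_SomeD[OF k(1)] by blast
    then show "w \<in> events P" unfolding events_def by blast
  qed
  show "events P \<subseteq> events (Ext P)"
    using subset_Ext unfolding events_def by blast
qed

lemma inputs_Ext [simp]: "inputs (Ext P) = inputs P"
proof (intro ext equalityI subsetI)
  fix w v assume "v \<in> inputs (Ext P) w"
  then obtain k where k: "k \<in> Ext P" "k w = Some v" unfolding inputs_def by blast
  then obtain f where "f \<in> P" "f w = Some v" using Ext_SomeD[OF k(1)] by blast
  then show "v \<in> inputs P w" unfolding inputs_def by auto
next
  fix w v assume "v \<in> inputs P w"
  then obtain f where "f \<in> P" "f w = Some v" unfolding inputs_def by blast
  then show "v \<in> inputs (Ext P) w" using subset_Ext unfolding inputs_def by auto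
qed

lemma Ext_memI_generators_below:
  assumes "k \<in> Ext P" "\<And>f. f \<in> P \<Longrightarrow> f \<subseteq>\<^sub>m k \<Longrightarrow> f \<in> Q"
  shows "k \<in> Ext Q"
proof -
  obtain F where F: "F \<noteq> {}" "F \<subseteq> P" "compatible F" "pf_join F = k"
    using assms(1) by (rule Ext_memE)
  have "F \<subseteq> Q"
  proof
    fix f assume "f \<in> F"
    then have "f \<subseteq>\<^sub>m k" using map_le_pf_join[OF F(3)] F(4) by blast
    then show "f \<in> Q" using assms(2) F(2) \<open>f \<in> F\<close> by blast
  qed
  then show ?thesis using Ext_memI[OF F(1) _ F(3)] F(4) by simp
qed

lemma empty_notin_join_prime:
  fixes P :: "('e,'v) pfun set"
  assumes "join_prime P"
  shows "Map.empty \<notin> P"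
proof
  let ?none = "{} :: ('e,'v) pfun set"
  have "compatible ?none" "pf_join ?none = Map.empty"
    unfolding compatible_def pf_join_def by simp_all
  moreover assume "Map.empty \<in> P"
  ultimately have "pf_join ?none \<in> ?none"
    using spec[OF assms[unfolded join_prime_def], of ?none] by simp
  then show False by simp
qed

lemma join_prime_subset: "join_prime P \<Longrightarrow> Q \<subseteq> P \<Longrightarrow> join_prime Q"
  unfolding join_prime_def by blast

lemma join_prime_Ext:
  assumes "join_prime P" "F \<subseteq> Ext P" "compatible F" "pf_join F \<in> P"
  shows "pf_join F \<in> F"
proof -
  obtain G where G: "G \<subseteq> P" "compatible G" "pf_join G = pf_join F" "\<forall>g\<in>G. \<exists>f\<in>F. g \<subseteq>\<^sub>m f"
    using assms(2,3) by (rule Ext_flatten)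
  have "pf_join G \<in> G"
    using spec[OF assms(1)[unfolded join_prime_def], of G] G(1-3) assms(4) by simp
  then obtain f where f: "f \<in> F" "pf_join F \<subseteq>\<^sub>m f" using G(3,4) by auto
  moreover have "f \<subseteq>\<^sub>m pf_join F" using assms(3) f(1) by (rule map_le_pf_join)
  ultimately have "pf_join F = f" using map_le_antisym by blast
  then show ?thesis using f(1) by simp
qed

lemma Ext_inj:
  assumes "join_prime P" "join_prime Q" "Ext P = Ext Q"
  shows "P = Q"
proof -
  have "P \<subseteq> Q" if jp: "join_prime P" and PQ: "Ext P = Ext Q" for P Q
  proof
    fix h assume "h \<in> P"
    then have "h \<in> Ext Q" using subset_Ext PQ by blast
    then obtain F where F: "F \<subseteq> Q" "compatible F" "pf_join F = h" by (rule Ext_memE)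
    have "F \<subseteq> Ext P" using F(1) subset_Ext PQ by blast
    then have "h \<in> F" using join_prime_Ext[OF jp _ F(2)] F(3) \<open>h \<in> P\<close> by blast
    then show "h \<in> Q" using F(1) by blast
  qed
  from this[OF assms(1,3)] this[OF assms(2) assms(3)[symmetric]] show ?thesis
    by (rule subset_antisym)
qed

section \<open>Free choice and tips\<close>

lemma inputs_nonempty: "w \<in> events P \<Longrightarrow> inputs P w \<noteq> {}"
  unfolding events_def inputs_def by blast

lemma total_funs_extend:
  assumes k: "k \<in> Ext P"
  obtains t where "t \<in> total_funs P" "k \<subseteq>\<^sub>m t"
proof
  define default where
    "default = (\<lambda>w. if w \<in> events P then Some (SOME v. v \<in> inputs P w) else None)"
  let ?t = "default ++ k"
  show "k \<subseteq>\<^sub>m ?t" by (rule map_le_map_add)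
  have dom_k: "dom k \<subseteq> events P" using dom_subset_events[OF k] by simp
  show "?t \<in> total_funs P"
    unfolding total_funs_def
  proof (intro CollectI conjI ballI)
    show "dom ?t = events P" using dom_k unfolding default_def by (auto split: if_splits)
    fix w assume w: "w \<in> events P"
    show "the (?t w) \<in> inputs P w"
    proof (cases "k w")
      case None
      then have "?t w = Some (SOME v. v \<in> inputs P w)"
        using w unfolding default_def by (simp add: map_add_def)
      then show ?thesis using some_in_eq inputs_nonempty[OF w] by auto
    next
      case (Some v)
      then have "v \<in> inputs (Ext P) w" using k unfolding inputs_def by blast
      then show ?thesis using Some by simp
    qed
  qed
qed

lemma total_funs_maximal:
  assumes t: "t \<in> total_funs P" and k: "k \<in> Ext P" and le: "t \<subseteq>\<^sub>m k"
  shows "k = t"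
proof (rule map_le_antisym[OF _ le])
  have "dom k \<subseteq> dom t" using dom_subset_events[OF k] t unfolding total_funs_def by simp
  show "k \<subseteq>\<^sub>m t" unfolding map_le_def
  proof
    fix w assume "w \<in> dom k"
    then have "w \<in> dom t" using \<open>dom k \<subseteq> dom t\<close> by blast
    then show "k w = t w" using le unfolding map_le_def by simp
  qed
qed

lemma free_choice_iff: "free_choice P \<longleftrightarrow> total_funs P \<subseteq> Ext P"
proof
  assume "free_choice P"
  then show "total_funs P \<subseteq> Ext P" unfolding free_choice_def maximal_ext_def by blast
next
  assume total: "total_funs P \<subseteq> Ext P"
  have "maximal_ext P \<subseteq> total_funs P"
  proof
    fix m assume m: "m \<in> maximal_ext P"
    then have "m \<in> Ext P" unfolding maximal_ext_def by blast
    then obtain t where t: "t \<in> total_funs P" "m \<subseteq>\<^sub>m t" by (rule total_funs_extend)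
    then have "t = m" using m total unfolding maximal_ext_def pf_le_def by blast
    then show "m \<in> total_funs P" using t(1) by simp
  qed
  moreover have "total_funs P \<subseteq> maximal_ext P"
    using total total_funs_maximal unfolding maximal_ext_def pf_le_def by blast
  ultimately show "free_choice P" unfolding free_choice_def by blast
qed

lemma tips_cong:
  assumes "Q \<subseteq> P" and "\<And>f. f \<in> P \<Longrightarrow> f \<subseteq>\<^sub>m h \<Longrightarrow> f \<in> Q"
  shows "tips Q h = tips P h"
proof -
  have "k \<in> Ext Q \<longleftrightarrow> k \<in> Ext P" if "pf_less k h" for k
  proof
    show "k \<in> Ext Q \<Longrightarrow> k \<in> Ext P" using Ext_mono[OF assms(1)] by blast
    have "k \<subseteq>\<^sub>m h" using that unfolding pf_less_def pf_le_def by blast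
    then show "k \<in> Ext P \<Longrightarrow> k \<in> Ext Q"
      using assms(2) map_le_trans by (blast intro: Ext_memI_generators_below)
  qed
  then show ?thesis unfolding tips_def by blast
qed

lemma empty_notin_causally_complete:
  assumes "causally_complete P"
  shows "Map.empty \<notin> P"
proof
  assume "Map.empty \<in> P"
  then obtain w where "tips P Map.empty = {w}" using assms unfolding causally_complete_def by blast
  moreover have "tips P Map.empty = {}" unfolding tips_def by simp
  ultimately show False by simp
qed

section \<open>Parallel composition\<close>

lemma mem_Un_left_if_dom_subset:
  assumes "events A \<inter> events B = {}" "Map.empty \<notin> B" "f \<in> A \<union> B" "dom f \<subseteq> events A"
  shows "f \<in> A"
proof (rule ccontr)
  assume "f \<notin> A"
  then have "f \<in> B" using assms(3) by blast
  then have "dom f = {}" using dom_subset_events[of f B] assms(1,4) by blast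
  then show False using \<open>f \<in> B\<close> assms(2) by simp
qed

lemma Ext_subset_Ext_Un_left:
  assumes "events A \<inter> events B = {}" "Map.empty \<notin> B"
    and "X \<subseteq> Ext (A \<union> B)" "events X \<subseteq> events A"
  shows "Ext X \<subseteq> Ext A"
proof (rule Ext_subset, rule subsetI)
  fix h assume "h \<in> X"
  then have h: "h \<in> Ext (A \<union> B)" "dom h \<subseteq> events A"
    using assms(3,4) dom_subset_events[of h X] by blast+
  show "h \<in> Ext A"
  proof (rule Ext_memI_generators_below[OF h(1)])
    fix f assume "f \<in> A \<union> B" "f \<subseteq>\<^sub>m h"
    then have "dom f \<subseteq> events A" using h(2) map_le_implies_dom_le by blast
    with assms(1,2) \<open>f \<in> A \<union> B\<close> show "f \<in> A" by (rule mem_Un_left_if_dom_subset)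
  qed
qed

lemma join_prime_Un:
  assumes "join_prime A" "join_prime B" "events A \<inter> events B = {}"
  shows "join_prime (A \<union> B)"
proof -
  have left: "pf_join F \<in> F"
    if "join_prime A" "events A \<inter> events B = {}" "Map.empty \<notin> B"
      and "F \<subseteq> A \<union> B" "compatible F" "pf_join F \<in> A" for A B F
  proof -
    have "F \<subseteq> A"
    proof
      fix f assume "f \<in> F"
      then have "dom f \<subseteq> events A"
        using map_le_pf_join[OF that(5)] map_le_implies_dom_le dom_subset_events[OF that(6)]
        by blast
      moreover have "f \<in> A \<union> B" using that(4) \<open>f \<in> F\<close> by blast
      ultimately show "f \<in> A" using mem_Un_left_if_dom_subset[OF that(2,3)] by blast
    qed
    then show ?thesis using spec[OF that(1)[unfolded join_prime_def], of F] that(5,6) by simp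
  qed
  show ?thesis unfolding join_prime_def
  proof (intro allI impI)
    fix F assume F: "F \<subseteq> A \<union> B \<and> compatible F \<and> pf_join F \<in> A \<union> B"
    show "pf_join F \<in> F"
    proof (cases "pf_join F \<in> A")
      case True
      with F show ?thesis using left[OF assms(1,3) empty_notin_join_prime[OF assms(2)]] by blast
    next
      case False
      with F have "F \<subseteq> B \<union> A" "pf_join F \<in> B" by blast+
      moreover have "events B \<inter> events A = {}" using assms(3) by blast
      ultimately show ?thesis
        using F left[OF assms(2) _ empty_notin_join_prime[OF assms(1)]] by blast
    qed
  qed
qed

lemma inputs_Un_left:
  assumes "events A \<inter> events B = {}" "w \<in> events A"
  shows "inputs (A \<union> B) w = inputs A w"
proof
  show "inputs (A \<union> B) w \<subseteq> inputs A w"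
  proof
    fix v assume "v \<in> inputs (A \<union> B) w"
    then obtain h where h: "h \<in> A \<union> B" "w \<in> dom h" "h w = Some v" unfolding inputs_def by blast
    have "h \<notin> B" using h(2) dom_subset_events[of h B] assms by blast
    then show "v \<in> inputs A w" using h unfolding inputs_def by blast
  qed
  show "inputs A w \<subseteq> inputs (A \<union> B) w" unfolding inputs_def by blast
qed

lemma events_Un: "events (A \<union> B) = events A \<union> events B"
  unfolding events_def by (rule UN_Un)

lemma restrict_map_total_funs:
  assumes disj: "events A \<inter> events B = {}" and t: "t \<in> total_funs (A \<union> B)"
  shows "t |` events A \<in> total_funs A"
  unfolding total_funs_def
proof (intro CollectI conjI ballI)
  have "dom t = events A \<union> events B" using t unfolding total_funs_def events_Un by simp
  then show "dom (t |` events A) = events A" by auto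
  fix w assume w: "w \<in> events A"
  then have "the (t w) \<in> inputs (A \<union> B) w" using t unfolding total_funs_def events_Un by blast
  then show "the ((t |` events A) w) \<in> inputs A w" using w inputs_Un_left[OF disj w] by simp
qed

lemma free_choice_Un:
  assumes fcA: "free_choice A" and fcB: "free_choice B" and disj: "events A \<inter> events B = {}"
  shows "free_choice (A \<union> B)"
  unfolding free_choice_iff
proof
  fix t assume t: "t \<in> total_funs (A \<union> B)"
  let ?tA = "t |` events A" and ?tB = "t |` events B"
  have "?tA \<in> total_funs A" using disj t by (rule restrict_map_total_funs)
  then have "?tA \<in> Ext A" using fcA unfolding free_choice_iff by blast
  moreover have "?tB \<in> total_funs B"
    using disj t by (intro restrict_map_total_funs) (auto simp: Un_commute)
  then have "?tB \<in> Ext B" using fcB unfolding free_choice_iff by blast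
  ultimately have parts: "{?tA, ?tB} \<subseteq> Ext (A \<union> B)"
    using Ext_mono[of A "A \<union> B"] Ext_mono[of B "A \<union> B"] by blast
  have le: "f \<subseteq>\<^sub>m t" if "f \<in> {?tA, ?tB}" for f
    using that unfolding map_le_def by (auto simp: restrict_map_def split: if_splits)
  have "dom t = events A \<union> events B" using t unfolding total_funs_def events_Un by simp
  then have "pf_join {?tA, ?tB} = t" by (intro pf_join_eqI le) auto
  moreover have "pf_join {?tA, ?tB} \<in> Ext (A \<union> B)"
  proof (rule pf_join_in_Ext)
    show "compatible {?tA, ?tB}" using le by (rule compatible_if_bounded)
  qed (use parts in simp_all)
  ultimately show "t \<in> Ext (A \<union> B)" by simp
qed

lemma tips_Un_left:
  assumes "events A \<inter> events B = {}" "Map.empty \<notin> B" "h \<in> A"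
  shows "tips (A \<union> B) h = tips A h"
proof (rule tips_cong[symmetric])
  fix f assume "f \<in> A \<union> B" "f \<subseteq>\<^sub>m h"
  moreover have "dom h \<subseteq> events A" using assms(3) by (rule dom_subset_events)
  ultimately have "dom f \<subseteq> events A" using map_le_implies_dom_le by blast
  with assms(1,2) \<open>f \<in> A \<union> B\<close> show "f \<in> A" by (rule mem_Un_left_if_dom_subset)
qed simp

lemma causally_complete_Un:
  assumes ccA: "causally_complete A" and ccB: "causally_complete B"
    and disj: "events A \<inter> events B = {}"
  shows "causally_complete (A \<union> B)"
  unfolding causally_complete_def
proof (intro conjI ballI)
  show "free_choice (A \<union> B)"
    using ccA ccB disj unfolding causally_complete_def by (blast intro: free_choice_Un)
  fix h assume "h \<in> A \<union> B"
  then show "\<exists>w. tips (A \<union> B) h = {w}"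
  proof
    assume "h \<in> A"
    then show ?thesis
      using ccA tips_Un_left[OF disj empty_notin_causally_complete[OF ccB]]
      unfolding causally_complete_def by simp
  next
    assume "h \<in> B"
    moreover have "events B \<inter> events A = {}" using disj by blast
    ultimately have "tips (B \<union> A) h = tips B h"
      using empty_notin_causally_complete[OF ccA] by (intro tips_Un_left)
    then show ?thesis
      using ccB \<open>h \<in> B\<close> unfolding causally_complete_def by (simp add: Un_commute)
  qed
qed

lemma is_space_Un:
  "is_space A \<Longrightarrow> is_space B \<Longrightarrow> events A \<inter> events B = {} \<Longrightarrow> is_space (A \<union> B)"
  unfolding is_space_def using join_prime_Un by blast

section \<open>Causal completions\<close>

definition cc_below :: "('e,'v) pfun set \<Rightarrow> ('e,'v) pfun set \<Rightarrow> bool" where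
  "cc_below X P \<longleftrightarrow> is_space X \<and> Ext P \<subseteq> Ext X \<and> causally_complete X"

lemma CC_iff:
  "X \<in> CC P \<longleftrightarrow> cc_below X P \<and> (\<forall>Y. cc_below Y P \<longrightarrow> Ext Y \<subseteq> Ext X \<longrightarrow> Ext X \<subseteq> Ext Y)"
  unfolding CC_def cc_below_def space_le_def Let_def by auto

lemma cc_below_mono: "cc_below X Q \<Longrightarrow> P \<subseteq> Q \<Longrightarrow> cc_below X P"
  unfolding cc_below_def using Ext_mono by blast

lemma cc_below_Un:
  assumes A: "cc_below A P" and B: "cc_below B Q" and disj: "events A \<inter> events B = {}"
  shows "cc_below (A \<union> B) (P \<union> Q)"
  unfolding cc_below_def
proof (intro conjI)
  show "is_space (A \<union> B)" "causally_complete (A \<union> B)"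
    using A B disj unfolding cc_below_def by (blast intro: is_space_Un causally_complete_Un)+
  have "P \<subseteq> Ext A" "Q \<subseteq> Ext B" using A B subset_Ext unfolding cc_below_def by blast+
  moreover have "Ext A \<subseteq> Ext (A \<union> B)" "Ext B \<subseteq> Ext (A \<union> B)" by (simp_all add: Ext_mono)
  ultimately show "Ext (P \<union> Q) \<subseteq> Ext (A \<union> B)" by (intro Ext_subset) blast
qed

text \<open>For a refinement \<open>C\<close> of \<open>P \<union> P'\<close> with \<open>events P \<inter> events P' = {}\<close>, this is the
  \<open>P\<close>-component of \<open>C\<close>.\<close>
definition restrict_space :: "('e,'v) pfun set \<Rightarrow> ('e,'v) pfun set \<Rightarrow> ('e,'v) pfun set" where
  "restrict_space C P = {h \<in> C. \<exists>k\<in>Ext P. h \<subseteq>\<^sub>m k}"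

lemma restrict_space_subset: "restrict_space C P \<subseteq> C"
  unfolding restrict_space_def by blast

lemma Ext_subset_Ext_restrict_space:
  assumes "Ext P \<subseteq> Ext C"
  shows "Ext P \<subseteq> Ext (restrict_space C P)"
proof
  fix k assume k: "k \<in> Ext P"
  with assms have "k \<in> Ext C" by blast
  then show "k \<in> Ext (restrict_space C P)"
    by (rule Ext_memI_generators_below) (use k in \<open>auto simp: restrict_space_def\<close>)
qed

lemma events_restrict_space:
  assumes "Ext P \<subseteq> Ext C"
  shows "events (restrict_space C P) = events P"
proof
  show "events (restrict_space C P) \<subseteq> events P"
  proof
    fix w assume "w \<in> events (restrict_space C P)"
    then obtain h k where "w \<in> dom h" "k \<in> Ext P" "h \<subseteq>\<^sub>m k"
      unfolding events_def restrict_space_def by blast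
    then have "w \<in> events (Ext P)"
      using map_le_implies_dom_le dom_subset_events by blast
    then show "w \<in> events P" by simp
  qed
  have "events (Ext P) \<subseteq> events (Ext (restrict_space C P))"
    using Ext_subset_Ext_restrict_space[OF assms] by (rule events_mono)
  then show "events P \<subseteq> events (restrict_space C P)" by simp
qed

lemma inputs_restrict_space:
  assumes "Ext P \<subseteq> Ext C"
  shows "inputs (restrict_space C P) = inputs P"
proof (intro ext equalityI subsetI)
  fix w v assume "v \<in> inputs (restrict_space C P) w"
  then obtain h where h: "h \<in> restrict_space C P" "h w = Some v" unfolding inputs_def by blast
  then obtain k where k: "k \<in> Ext P" "h \<subseteq>\<^sub>m k" unfolding restrict_space_def by blast
  have "w \<in> dom h" using h(2) by blast
  then have "k w = Some v" using k(2) h(2) unfolding map_le_def by simp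
  then have "v \<in> inputs (Ext P) w" using k(1) unfolding inputs_def by auto
  then show "v \<in> inputs P w" by simp
next
  fix w v assume "v \<in> inputs P w"
  moreover have "inputs (Ext P) w \<subseteq> inputs (Ext (restrict_space C P)) w"
    using Ext_subset_Ext_restrict_space[OF assms] by (rule inputs_mono)
  ultimately show "v \<in> inputs (restrict_space C P) w" by auto
qed

lemma cc_below_restrict_space:
  assumes C: "cc_below C P" and fc: "free_choice P"
  shows "cc_below (restrict_space C P) P"
proof -
  let ?D = "restrict_space C P"
  have PC: "Ext P \<subseteq> Ext C" using C unfolding cc_below_def by blast
  have "is_space ?D"
    using C restrict_space_subset[of C P] finite_subset join_prime_subset
    unfolding cc_below_def is_space_def by metis
  moreover have PD: "Ext P \<subseteq> Ext ?D" using PC by (rule Ext_subset_Ext_restrict_space)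
  moreover have "free_choice ?D"
  proof -
    have "total_funs ?D = total_funs P"
      unfolding total_funs_def events_restrict_space[OF PC] inputs_restrict_space[OF PC] ..
    then show ?thesis using fc PD unfolding free_choice_iff by auto
  qed
  moreover have "tips ?D h = tips C h" if "h \<in> ?D" for h
  proof (rule tips_cong[OF restrict_space_subset])
    fix f assume "f \<in> C" "f \<subseteq>\<^sub>m h"
    then show "f \<in> ?D" using that map_le_trans unfolding restrict_space_def by blast
  qed
  then have "\<forall>h\<in>?D. \<exists>w. tips ?D h = {w}"
    using C restrict_space_subset[of C P] unfolding cc_below_def causally_complete_def by auto
  ultimately show ?thesis unfolding cc_below_def causally_complete_def by blast
qed

lemma CC_eq_if_subset:
  assumes C: "C \<in> CC P" and D: "cc_below D P" and "D \<subseteq> C"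
  shows "D = C"
proof (rule Ext_inj)
  have "Ext D \<subseteq> Ext C" using \<open>D \<subseteq> C\<close> by (rule Ext_mono)
  moreover have "Ext C \<subseteq> Ext D" using C D \<open>Ext D \<subseteq> Ext C\<close> unfolding CC_iff by blast
  ultimately show "Ext D = Ext C" by (rule subset_antisym)
  show "join_prime D" "join_prime C"
    using C D unfolding CC_iff cc_below_def is_space_def by blast+
qed

lemma events_CC:
  assumes "X \<in> CC P" "free_choice P"
  shows "events X = events P"
proof -
  have X: "cc_below X P" using assms(1) unfolding CC_iff by blast
  then have "cc_below (restrict_space X P) P" using assms(2) by (rule cc_below_restrict_space)
  then have "restrict_space X P = X"
    using assms(1) restrict_space_subset CC_eq_if_subset by blast
  then show ?thesis
    using events_restrict_space[of P X] X unfolding cc_below_def by simp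
qed

lemma CC_Un_eq_restrict_space:
  assumes fc: "free_choice T" "free_choice T'" and disj: "events T \<inter> events T' = {}"
    and C: "C \<in> CC (T \<union> T')"
  shows "restrict_space C T \<union> restrict_space C T' = C"
proof (rule CC_eq_if_subset[OF C])
  have CT: "cc_below C T" and CT': "cc_below C T'"
    using C cc_below_mono unfolding CC_iff by blast+
  have "events (restrict_space C T) \<inter> events (restrict_space C T') = {}"
    using CT CT' disj events_restrict_space unfolding cc_below_def by metis
  with cc_below_restrict_space[OF CT fc(1)] cc_below_restrict_space[OF CT' fc(2)]
  show "cc_below (restrict_space C T \<union> restrict_space C T') (T \<union> T')"
    by (rule cc_below_Un)
  show "restrict_space C T \<union> restrict_space C T' \<subseteq> C"
    using restrict_space_subset by blast
qed

lemma restrict_space_in_CC: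
  assumes fc: "free_choice T" "free_choice T'" and disj: "events T \<inter> events T' = {}"
    and C: "C \<in> CC (T \<union> T')"
  shows "restrict_space C T \<in> CC T"
proof -
  let ?A = "restrict_space C T" and ?B = "restrict_space C T'"
  have CT: "cc_below C T" and CT': "cc_below C T'"
    using C cc_below_mono unfolding CC_iff by blast+
  have A: "cc_below ?A T" using CT fc(1) by (rule cc_below_restrict_space)
  have B: "cc_below ?B T'" using CT' fc(2) by (rule cc_below_restrict_space)
  have events_A: "events ?A = events T" and events_B: "events ?B = events T'"
    using CT CT' events_restrict_space unfolding cc_below_def by blast+
  have B_nonempty: "Map.empty \<notin> ?B"
    using B empty_notin_causally_complete unfolding cc_below_def by blast
  have C_eq: "?A \<union> ?B = C" using fc disj C by (rule CC_Un_eq_restrict_space)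
  show ?thesis unfolding CC_iff
  proof (intro conjI allI impI A)
    fix Y assume Y: "cc_below Y T" and YA: "Ext Y \<subseteq> Ext ?A"
    let ?Y' = "restrict_space Y T"
    have Y': "cc_below ?Y' T" using Y fc(1) by (rule cc_below_restrict_space)
    have events_Y': "events ?Y' = events T"
      using Y events_restrict_space unfolding cc_below_def by blast
    have disj': "events ?Y' \<inter> events ?B = {}" using disj events_Y' events_B by simp
    have "?Y' \<subseteq> Ext C"
    proof -
      have "?Y' \<subseteq> Ext Y" using restrict_space_subset subset_Ext by blast
      also have "\<dots> \<subseteq> Ext ?A" by (rule YA)
      also have "\<dots> \<subseteq> Ext C" using C_eq by (intro Ext_mono) blast
      finally show ?thesis .
    qed
    moreover have "?B \<subseteq> Ext C" using C_eq subset_Ext by blast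
    ultimately have "Ext (?Y' \<union> ?B) \<subseteq> Ext C" by (intro Ext_subset) blast
    moreover have "cc_below (?Y' \<union> ?B) (T \<union> T')" using Y' B disj' by (rule cc_below_Un)
    ultimately have "Ext C \<subseteq> Ext (?Y' \<union> ?B)" using C unfolding CC_iff by blast
    then have "?A \<subseteq> Ext (?Y' \<union> ?B)" using C_eq subset_Ext by blast
    then have "Ext ?A \<subseteq> Ext ?Y'"
      using Ext_subset_Ext_Un_left[OF disj' B_nonempty] events_A events_Y' by blast
    also have "\<dots> \<subseteq> Ext Y" by (intro Ext_mono restrict_space_subset)
    finally show "Ext ?A \<subseteq> Ext Y" .
  qed
qed

lemma Ext_CC_subset_if_Ext_Un:
  assumes fc: "free_choice T" and A: "A \<in> CC T" and C: "cc_below C T"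
    and disj: "events T \<inter> events B = {}" and B_nonempty: "Map.empty \<notin> B"
    and CAB: "Ext C \<subseteq> Ext (A \<union> B)"
  shows "Ext A \<subseteq> Ext C"
proof -
  let ?D = "restrict_space C T"
  have D: "cc_below ?D T" using C fc by (rule cc_below_restrict_space)
  have "?D \<subseteq> Ext (A \<union> B)" using CAB restrict_space_subset subset_Ext by blast
  moreover have "events ?D = events A"
    using C events_restrict_space events_CC[OF A fc] unfolding cc_below_def by blast
  moreover have "events A \<inter> events B = {}" using disj events_CC[OF A fc] by simp
  ultimately have "Ext ?D \<subseteq> Ext A" using B_nonempty Ext_subset_Ext_Un_left by blast
  then have "Ext A \<subseteq> Ext ?D" using A D unfolding CC_iff by blast
  also have "\<dots> \<subseteq> Ext C" by (intro Ext_mono restrict_space_subset)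
  finally show ?thesis .
qed

lemma Un_in_CC:
  assumes fc: "free_choice T" "free_choice T'" and disj: "events T \<inter> events T' = {}"
    and A: "A \<in> CC T" and B: "B \<in> CC T'"
  shows "A \<union> B \<in> CC (T \<union> T')"
  unfolding CC_iff
proof (intro conjI allI impI)
  have events_A: "events A = events T" and events_B: "events B = events T'"
    using A B fc by (simp_all add: events_CC)
  have "cc_below A T" "cc_below B T'" using A B unfolding CC_iff by blast+
  moreover have "events A \<inter> events B = {}" using disj events_A events_B by simp
  ultimately show "cc_below (A \<union> B) (T \<union> T')" by (rule cc_below_Un)
  have A_nonempty: "Map.empty \<notin> A" and B_nonempty: "Map.empty \<notin> B"
    using A B empty_notin_causally_complete unfolding CC_iff cc_below_def by blast+
  fix C assume C: "cc_below C (T \<union> T')" and CAB: "Ext C \<subseteq> Ext (A \<union> B)"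
  have CT: "cc_below C T" and CT': "cc_below C T'" using C cc_below_mono by blast+
  have "Ext A \<subseteq> Ext C"
  proof (rule Ext_CC_subset_if_Ext_Un[OF fc(1) A CT _ B_nonempty CAB])
    show "events T \<inter> events B = {}" using disj events_B by simp
  qed
  moreover have "Ext B \<subseteq> Ext C"
  proof (rule Ext_CC_subset_if_Ext_Un[OF fc(2) B CT' _ A_nonempty])
    show "events T' \<inter> events A = {}" using disj events_A by blast
    show "Ext C \<subseteq> Ext (B \<union> A)" using CAB by (simp add: Un_commute)
  qed
  ultimately show "Ext (A \<union> B) \<subseteq> Ext C" by (simp add: Ext_subset_Ext_iff)
qed

theorem theorem1:
  fixes \<Theta> \<Theta>' :: "('e,'v) pfun set"
  assumes "is_space \<Theta>" and "is_space \<Theta>'"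
    and "free_choice \<Theta>" and "free_choice \<Theta>'"
    and "events \<Theta> \<inter> events \<Theta>' = {}"
  shows "CC (\<Theta> \<union> \<Theta>') = {A \<union> B | A B. A \<in> CC \<Theta> \<and> B \<in> CC \<Theta>'}"
proof (intro equalityI subsetI)
  fix C assume C: "C \<in> CC (\<Theta> \<union> \<Theta>')"
  have "restrict_space C \<Theta> \<in> CC \<Theta>" using assms(3-5) C by (rule restrict_space_in_CC)
  moreover have "restrict_space C \<Theta>' \<in> CC \<Theta>'"
  proof (rule restrict_space_in_CC[OF assms(4,3)])
    show "events \<Theta>' \<inter> events \<Theta> = {}" using assms(5) by blast
    show "C \<in> CC (\<Theta>' \<union> \<Theta>)" using C by (simp add: Un_commute)
  qed
  moreover have "restrict_space C \<Theta> \<union> restrict_space C \<Theta>' = C"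
    using assms(3-5) C by (rule CC_Un_eq_restrict_space)
  ultimately show "C \<in> {A \<union> B | A B. A \<in> CC \<Theta> \<and> B \<in> CC \<Theta>'}" by auto
next
  fix X assume "X \<in> {A \<union> B | A B. A \<in> CC \<Theta> \<and> B \<in> CC \<Theta>'}"
  then obtain A B where "X = A \<union> B" "A \<in> CC \<Theta>" "B \<in> CC \<Theta>'" by blast
  then show "X \<in> CC (\<Theta> \<union> \<Theta>')" using Un_in_CC[OF assms(3-5)] by simp
qed

end
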